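(* Let $T>0$ and let $S:[0,1]\to\mathbb{R}$ be continuous and concave. Define the successor function $\lambda:\mathbb{R}\to\mathbb{R}$ by $\lambda(x)=\min_{p\in[0,1]}\big(px-T\,S(p)\big)$, and the operation $x\oplus_S y=\min_{p\in[0,1]}\big(px+(1-p)y-T\,S(p)\big)=\lambda(x-y)+y$ on $\mathbb{R}$. Then: (1) $S(p)=S(1-p)$ for all $p\in[0,1]$ if and only if $\lambda(x)-\lambda(-x)=x$ for all $x\in\mathbb{R}$; (2) $S(0)=0$ if and only if $\lambda(x)\le 0$ for all $x$ and $\lim_{x\to+\infty}\lambda(x)=0$; (3) $S(1)=0$ if and only if $\lambda(x)\le x$ for all $x$ and $\lim_{x\to-\infty}(\lambda(x)-x)=0$; (4) $S$ satisfies the associativity condition — for all $p_1,p_2\ge 0$ with $p_1+p_2\le1$, $p_1<1$, $p_1+p_2>0$: $S(p_1)+(1-p_1)S\big(\frac{p_2}{1-p_1}\big)=S(p_1+p_2)+(p_1+p_2)S\big(\frac{p_1}{p_1+p_2}\big)$ — making $\oplus_S$ associative on $\mathbb{R}$, if and only if $\lambda(x-\lambda(y))+\lambda(y)=\lambda(\lambda(x-y)+y)$ for all $x,y\in\mathbb{R}$.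
   Context: The operation $\oplus_S$ is the "thermodynamic semiring" addition on $\mathbb{R}$ (min-plus convention) associated with the entropy function $S$ at temperature $T$. *)

theory Defs
  imports "HOL-Analysis.Analysis"
begin

text \<open>Successor function: lambda(x) = min over p in [0,1] of (p x - T S(p)).
  The minimum exists for continuous S; we write it as the infimum of the image.\<close>
definition succ_fun :: "real \<Rightarrow> (real \<Rightarrow> real) \<Rightarrow> real \<Rightarrow> real" where
  "succ_fun T S x = Inf ((\<lambda>p. p * x - T * S p) ` {0..1})"

definition thermo_add :: "real \<Rightarrow> (real \<Rightarrow> real) \<Rightarrow> real \<Rightarrow> real \<Rightarrow> real" where
  "thermo_add T S x y = Inf ((\<lambda>p. p * x + (1 - p) * y - T * S p) ` {0..1})"

definition assoc_cond :: "(real \<Rightarrow> real) \<Rightarrow> bool" where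
  "assoc_cond S \<longleftrightarrow> (\<forall>p1 p2. p1 \<ge> 0 \<and> p2 \<ge> 0 \<and> p1 + p2 \<le> 1 \<and> p1 < 1 \<and> p1 + p2 > 0 \<longrightarrow>
      S p1 + (1 - p1) * S (p2 / (1 - p1)) = S (p1 + p2) + (p1 + p2) * S (p1 / (p1 + p2)))"

end

theory Submission
  imports Defs
begin

text \<open>The successor function \<open>\<lambda>\<close> is the concave Legendre transform of \<open>T \<cdot> S\<close> over \<open>[0, 1]\<close>, and
  for continuous concave \<open>S\<close> the transform can be inverted: \<open>T S(p) = inf\<^sub>x (p x - \<lambda>(x))\<close>, because
  \<open>S\<close> lies below affine functions touching it at \<open>p\<close> up to any \<open>\<delta> > 0\<close>. Hence two functions arising as
  such transforms coincide iff their entropies do. Now \<open>x \<mapsto> \<lambda>(-x) + x\<close> is the transform of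
  \<open>p \<mapsto> T S(1 - p)\<close>, which gives (1); \<open>-T S(0)\<close> and \<open>-T S(1)\<close> are the limits of \<open>\<lambda>(x)\<close> at \<open>+\<infinity>\<close>
  and of \<open>\<lambda>(x) - x\<close> at \<open>-\<infinity>\<close>, which gives (2) and (3). For (4), the two nested minimisations
  \<open>\<lambda>(x - \<lambda>(y)) + \<lambda>(y)\<close> and \<open>\<lambda>(\<lambda>(x - y) + y)\<close> are transforms, over the triangle of weights
  \<open>(p\<^sub>1, p\<^sub>2)\<close>, of the two sides of the associativity condition.\<close>

lemma continuous_on_compact_Inf_image:
  fixes g :: "'a::topological_space \<Rightarrow> real"
  assumes "compact K" "K \<noteq> {}" "continuous_on K g"
  obtains p where "p \<in> K" "Inf (g ` K) = g p" "\<forall>q\<in>K. g p \<le> g q"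
proof -
  obtain p where p: "p \<in> K" "\<forall>q\<in>K. g p \<le> g q"
    using continuous_attains_inf[OF assms] by blast
  then have "Inf (g ` K) = g p" by (intro cInf_eq_minimum) auto
  with p that show ?thesis by blast
qed

lemma concave_on_Icc_supergradient:
  fixes f :: "real \<Rightarrow> real"
  assumes conc: "concave_on {a..b} f" and p: "a < p" "p < b"
  shows "\<exists>m. \<forall>q\<in>{a..b}. f q \<le> f p + m * (q - p)"
proof -
  have slope_mono: "(f r - f p) / (r - p) \<le> (f p - f q) / (p - q)"
    if "q \<in> {a..b}" "r \<in> {a..b}" "q < p" "p < r" for q r
    using convex_on_slope_le(1)[of "{a..b}" "\<lambda>x. - f x" q r p] conc that
    by (simp add: concave_on_def divide_simps algebra_simps)
  define m where "m = Inf ((\<lambda>q. (f p - f q) / (p - q)) ` {a..<p})"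
  have bdd: "bdd_below ((\<lambda>q. (f p - f q) / (p - q)) ` {a..<p})"
    using slope_mono[of _ b] p by (intro bdd_belowI2[where m = "(f b - f p) / (b - p)"]) auto
  have "f q \<le> f p + m * (q - p)" if q: "q \<in> {a..b}" for q
  proof (cases q p rule: linorder_cases)
    case less
    then have "m \<le> (f p - f q) / (p - q)"
      unfolding m_def using q by (intro cInf_lower[OF _ bdd]) auto
    with less show ?thesis by (simp add: divide_simps algebra_simps)
  next
    case greater
    have "(f q - f p) / (q - p) \<le> m"
      unfolding m_def using p q greater by (intro cINF_greatest slope_mono) auto
    with greater show ?thesis by (simp add: divide_simps algebra_simps)
  qed simp
  then show ?thesis by blast
qed

lemma continuous_on_Icc_affine_majorant_left:
  fixes f :: "real \<Rightarrow> real"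
  assumes cont: "continuous_on {a..b} f" and ab: "a \<le> b" and \<delta>: "\<delta> > 0"
  shows "\<exists>m. \<forall>q\<in>{a..b}. f q \<le> f a + \<delta> + m * (q - a)"
proof -
  obtain M where M: "\<forall>q\<in>{a..b}. f q \<le> M"
    using continuous_attains_sup[OF compact_Icc _ cont] ab by auto
  obtain \<eta> where \<eta>: "\<eta> > 0" "\<forall>q\<in>{a..b}. dist q a < \<eta> \<longrightarrow> dist (f q) (f a) < \<delta>"
    using cont \<delta> ab unfolding continuous_on_iff by fastforce
  define m where "m = max 0 ((M - f a) / \<eta>)"
  have "f q \<le> f a + \<delta> + m * (q - a)" if q: "q \<in> {a..b}" for q
  proof (cases "q - a < \<eta>")
    case True
    then have "f q < f a + \<delta>" using \<eta> q by (auto simp: dist_real_def)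
    moreover have "m * (q - a) \<ge> 0" using q by (simp add: m_def)
    ultimately show ?thesis by linarith
  next
    case False
    have "M - f a = (M - f a) / \<eta> * \<eta>" using \<eta> by simp
    also have "\<dots> \<le> m * \<eta>" using \<eta> by (intro mult_right_mono) (auto simp: m_def)
    also have "\<dots> \<le> m * (q - a)" using False by (intro mult_left_mono) (auto simp: m_def)
    finally show ?thesis using M q \<delta> by fastforce
  qed
  then show ?thesis by blast
qed

lemma concave_on_Icc_affine_majorant:
  fixes f :: "real \<Rightarrow> real"
  assumes conc: "concave_on {a..b} f" and cont: "continuous_on {a..b} f"
    and p: "p \<in> {a..b}" and \<delta>: "\<delta> > 0"
  shows "\<exists>m. \<forall>q\<in>{a..b}. f q \<le> f p + \<delta> + m * (q - p)"
proof -
  consider "p = a" | "p = b" | "a < p" "p < b" using p by fastforce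
  then show ?thesis
  proof cases
    case 1
    then show ?thesis using continuous_on_Icc_affine_majorant_left[OF cont _ \<delta>] p by auto
  next
    case 2
    have "continuous_on {a..b} (\<lambda>q. f (a + b - q))"
      by (rule continuous_on_compose2[OF cont]) (auto intro!: continuous_intros)
    then obtain m where m: "\<forall>q\<in>{a..b}. f (a + b - q) \<le> f b + \<delta> + m * (q - a)"
      using continuous_on_Icc_affine_majorant_left[OF _ _ \<delta>] p by fastforce
    have "f q \<le> f b + \<delta> + (- m) * (q - b)" if "q \<in> {a..b}" for q
      using m[rule_format, of "a + b - q"] that by (simp add: algebra_simps)
    with 2 show ?thesis by blast
  next
    case 3
    then obtain m where "\<forall>q\<in>{a..b}. f q \<le> f p + m * (q - p)"
      using concave_on_Icc_supergradient[OF conc] by blast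
    then have "\<forall>q\<in>{a..b}. f q \<le> f p + \<delta> + m * (q - p)" using \<delta> by force
    then show ?thesis ..
  qed
qed

text \<open>The last clause makes \<open>E\<close> the inverse transform of \<open>\<Phi>\<close>: \<open>E d = inf\<^sub>x (\<langle>d, x\<rangle> - \<Phi> x)\<close>.\<close>

definition legendre_dual :: "'a::real_inner set \<Rightarrow> ('a \<Rightarrow> real) \<Rightarrow> ('a \<Rightarrow> real) \<Rightarrow> bool" where
  "legendre_dual D E \<Phi> \<longleftrightarrow>
     (\<forall>x. \<forall>d\<in>D. \<Phi> x \<le> inner d x - E d) \<and>
     (\<forall>x. \<exists>d\<in>D. \<Phi> x = inner d x - E d) \<and>
     (\<forall>d\<in>D. \<forall>\<epsilon>>0. \<exists>x. inner d x - E d - \<epsilon> < \<Phi> x)"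

lemma legendre_dualI:
  assumes "\<And>x d. d \<in> D \<Longrightarrow> \<Phi> x \<le> inner d x - E d"
    and "\<And>x. \<exists>d\<in>D. \<Phi> x = inner d x - E d"
    and "\<And>d \<epsilon>. d \<in> D \<Longrightarrow> \<epsilon> > 0 \<Longrightarrow> \<exists>x. inner d x - E d - \<epsilon> < \<Phi> x"
  shows "legendre_dual D E \<Phi>"
  using assms unfolding legendre_dual_def by blast

lemma legendre_dualD:
  assumes "legendre_dual D E \<Phi>"
  shows legendre_dual_le: "d \<in> D \<Longrightarrow> \<Phi> x \<le> inner d x - E d"
    and legendre_dual_attained: "\<exists>d\<in>D. \<Phi> x = inner d x - E d"
    and legendre_dual_approx: "d \<in> D \<Longrightarrow> \<epsilon> > 0 \<Longrightarrow> \<exists>x. inner d x - E d - \<epsilon> < \<Phi> x"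
  using assms unfolding legendre_dual_def by blast+

lemma legendre_dual_le_iff:
  assumes \<Phi>: "legendre_dual D E \<Phi>" and \<Psi>: "legendre_dual D E' \<Psi>"
  shows "(\<forall>x. \<Phi> x \<le> \<Psi> x) \<longleftrightarrow> (\<forall>d\<in>D. E' d \<le> E d)"
proof safe
  fix d assume le: "\<forall>x. \<Phi> x \<le> \<Psi> x" and d: "d \<in> D"
  show "E' d \<le> E d"
  proof (rule field_le_epsilon)
    fix \<epsilon> :: real assume "\<epsilon> > 0"
    then obtain x where "inner d x - E d - \<epsilon> < \<Phi> x"
      using legendre_dual_approx[OF \<Phi> d] by blast
    moreover have "\<Psi> x \<le> inner d x - E' d" using legendre_dual_le[OF \<Psi> d] .
    ultimately show "E' d \<le> E d + \<epsilon>" using le[rule_format, of x] by linarith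
  qed
next
  fix x assume le: "\<forall>d\<in>D. E' d \<le> E d"
  obtain d where d: "d \<in> D" "\<Psi> x = inner d x - E' d"
    using legendre_dual_attained[OF \<Psi>] by blast
  show "\<Phi> x \<le> \<Psi> x" using legendre_dual_le[OF \<Phi> d(1), of x] le d by fastforce
qed

lemma legendre_dual_eq_iff:
  assumes "legendre_dual D E \<Phi>" and "legendre_dual D E' \<Psi>"
  shows "(\<forall>x. \<Phi> x = \<Psi> x) \<longleftrightarrow> (\<forall>d\<in>D. E d = E' d)"
proof -
  have "(\<forall>x. \<Phi> x = \<Psi> x) \<longleftrightarrow> (\<forall>x. \<Phi> x \<le> \<Psi> x) \<and> (\<forall>x. \<Psi> x \<le> \<Phi> x)"
    by (auto intro: order_antisym)
  also have "\<dots> \<longleftrightarrow> (\<forall>d\<in>D. E' d \<le> E d) \<and> (\<forall>d\<in>D. E d \<le> E' d)"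
    using legendre_dual_le_iff[OF assms] legendre_dual_le_iff[OF assms(2,1)] by simp
  also have "\<dots> \<longleftrightarrow> (\<forall>d\<in>D. E d = E' d)"
    by (auto intro: order_antisym)
  finally show ?thesis .
qed

lemma legendre_dual_reparam:
  assumes D: "D = g ` P" and E: "\<And>u. u \<in> P \<Longrightarrow> E (g u) = F u"
    and "\<And>x u. u \<in> P \<Longrightarrow> \<Phi> x \<le> inner (g u) x - F u"
    and "\<And>x. \<exists>u\<in>P. \<Phi> x = inner (g u) x - F u"
    and "\<And>u \<epsilon>. u \<in> P \<Longrightarrow> \<epsilon> > 0 \<Longrightarrow> \<exists>x. inner (g u) x - F u - \<epsilon> < \<Phi> x"
  shows "legendre_dual D E \<Phi>"
  using assms(3-) unfolding D by (intro legendre_dualI) (auto simp: E)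

lemma legendre_dual_Icc_mono:
  fixes \<Phi> :: "real \<Rightarrow> real"
  assumes "legendre_dual {0..1} E \<Phi>"
  shows "mono \<Phi>"
proof
  fix x y :: real assume "x \<le> y"
  obtain p where p: "p \<in> {0..1}" "\<Phi> y = p * y - E p"
    using legendre_dual_attained[OF assms, of y] by auto
  have "\<Phi> x \<le> p * x - E p" using legendre_dual_le[OF assms p(1)] by simp
  also have "\<dots> \<le> p * y - E p" using p \<open>x \<le> y\<close> by (simp add: mult_left_mono)
  finally show "\<Phi> x \<le> \<Phi> y" using p by simp
qed

lemma legendre_dual_Icc_tendsto_at_top:
  fixes \<Phi> :: "real \<Rightarrow> real"
  assumes \<Phi>: "legendre_dual {0..1} E \<Phi>"
  shows "(\<Phi> \<longlongrightarrow> - E 0) at_top"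
proof (rule order_tendstoI)
  fix a assume "a < - E 0"
  then obtain x0 where x0: "a < \<Phi> x0"
    using legendre_dual_approx[OF \<Phi>, of 0 "- E 0 - a"] by auto
  show "\<forall>\<^sub>F x in at_top. a < \<Phi> x"
    using eventually_ge_at_top[of x0]
    by eventually_elim (use x0 legendre_dual_Icc_mono[OF \<Phi>] in \<open>meson less_le_trans monoD\<close>)
next
  fix a assume "- E 0 < a"
  moreover have "\<Phi> x \<le> - E 0" for x using legendre_dual_le[OF \<Phi>, of 0 x] by simp
  ultimately show "\<forall>\<^sub>F x in at_top. \<Phi> x < a"
    by (intro always_eventually allI) (rule le_less_trans)
qed

lemma legendre_dual_Icc_reflect:
  fixes \<Phi> :: "real \<Rightarrow> real"
  assumes \<Phi>: "legendre_dual {0..1} E \<Phi>"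
  shows "legendre_dual {0..1} (\<lambda>p. E (1 - p)) (\<lambda>x. \<Phi> (- x) + x)"
proof (rule legendre_dualI)
  fix x d :: real assume "d \<in> {0..1}"
  then show "\<Phi> (- x) + x \<le> inner d x - E (1 - d)"
    using legendre_dual_le[OF \<Phi>, of "1 - d" "- x"] by (simp add: algebra_simps)
next
  fix x :: real
  obtain d where "d \<in> {0..1}" "\<Phi> (- x) = d * (- x) - E d"
    using legendre_dual_attained[OF \<Phi>, of "- x"] by auto
  then show "\<exists>d\<in>{0..1}. \<Phi> (- x) + x = inner d x - E (1 - d)"
    by (intro bexI[of _ "1 - d"]) (auto simp: algebra_simps)
next
  fix d \<epsilon> :: real assume "d \<in> {0..1}" "\<epsilon> > 0"
  then obtain x where "(1 - d) * x - E (1 - d) - \<epsilon> < \<Phi> x"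
    using legendre_dual_approx[OF \<Phi>, of "1 - d" \<epsilon>] by auto
  then show "\<exists>x. inner d x - E (1 - d) - \<epsilon> < \<Phi> (- x) + x"
    by (intro exI[of _ "- x"]) (simp add: algebra_simps)
qed

lemma legendre_dual_Icc_zero_iff:
  fixes \<Phi> :: "real \<Rightarrow> real"
  assumes \<Phi>: "legendre_dual {0..1} E \<Phi>"
  shows "E 0 = 0 \<longleftrightarrow> (\<forall>x. \<Phi> x \<le> 0) \<and> (\<Phi> \<longlongrightarrow> 0) at_top"
proof
  assume "E 0 = 0"
  then show "(\<forall>x. \<Phi> x \<le> 0) \<and> (\<Phi> \<longlongrightarrow> 0) at_top"
    using legendre_dual_le[OF \<Phi>, of 0] legendre_dual_Icc_tendsto_at_top[OF \<Phi>] by auto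
next
  assume "(\<forall>x. \<Phi> x \<le> 0) \<and> (\<Phi> \<longlongrightarrow> 0) at_top"
  then show "E 0 = 0"
    using tendsto_unique[OF _ legendre_dual_Icc_tendsto_at_top[OF \<Phi>]] by force
qed

lemma legendre_dual_Icc_one_iff:
  fixes \<Phi> :: "real \<Rightarrow> real"
  assumes \<Phi>: "legendre_dual {0..1} E \<Phi>"
  shows "E 1 = 0 \<longleftrightarrow> (\<forall>x. \<Phi> x \<le> x) \<and> ((\<lambda>x. \<Phi> x - x) \<longlongrightarrow> 0) at_bot"
proof -
  have "(\<forall>x. \<Phi> x \<le> x) \<longleftrightarrow> (\<forall>x. \<Phi> (- x) + x \<le> 0)"
    by (metis add.commute le_minus_iff minus_minus diff_le_0_iff_le diff_conv_add_uminus)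
  moreover have "((\<lambda>x. \<Phi> x - x) \<longlongrightarrow> 0) at_bot \<longleftrightarrow> ((\<lambda>x. \<Phi> (- x) + x) \<longlongrightarrow> 0) at_top"
    by (simp add: filterlim_at_bot_mirror)
  ultimately show ?thesis
    using legendre_dual_Icc_zero_iff[OF legendre_dual_Icc_reflect[OF \<Phi>]] by simp
qed

definition simplex2 :: "(real \<times> real) set" where
  "simplex2 = {(p1, p2). 0 \<le> p1 \<and> 0 \<le> p2 \<and> p1 + p2 \<le> 1}"

text \<open>Where a
  denominator vanishes (\<open>p1 + p2 = 0\<close>, resp. \<open>p1 = 1\<close>) the convention \<open>x / 0 = 0\<close> gives the value
  of the two-stage parametrisation used in \<open>legendre_dual_nested_left/right\<close>.\<close>

definition nested_entropy_left :: "(real \<Rightarrow> real) \<Rightarrow> real \<times> real \<Rightarrow> real" where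
  "nested_entropy_left E = (\<lambda>(p1, p2). E (p1 + p2) + (p1 + p2) * E (p1 / (p1 + p2)))"

definition nested_entropy_right :: "(real \<Rightarrow> real) \<Rightarrow> real \<times> real \<Rightarrow> real" where
  "nested_entropy_right E = (\<lambda>(p1, p2). E p1 + (1 - p1) * E (p2 / (1 - p1)))"

lemma assoc_cond_iff_nested_entropy_eq:
  "assoc_cond S \<longleftrightarrow> (\<forall>d\<in>simplex2. nested_entropy_right S d = nested_entropy_left S d)"
proof
  assume A: "assoc_cond S"
  have inst: "S p1 + (1 - p1) * S (p2 / (1 - p1)) = S (p1 + p2) + (p1 + p2) * S (p1 / (p1 + p2))"
    if "0 \<le> p1" "0 \<le> p2" "p1 + p2 \<le> 1" "p1 < 1" "p1 + p2 > 0" for p1 p2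
    using A that unfolding assoc_cond_def by blast
  \<comment> \<open>the two instances with \<open>p2 = 0\<close>, \<open>p1 \<in> {1/2, 1/3}\<close> force \<open>S 0 = S 1 = 0\<close>\<close>
  have "S 0 = S 1" "2 * S 0 = S 1"
    using inst[of "1/2" 0] inst[of "1/3" 0] by simp_all
  then have "S 0 = 0" "S 1 = 0" by simp_all
  show "\<forall>d\<in>simplex2. nested_entropy_right S d = nested_entropy_left S d"
  proof
    fix d assume "d \<in> simplex2"
    then obtain p1 p2 where d: "d = (p1, p2)" "0 \<le> p1" "0 \<le> p2" "p1 + p2 \<le> 1"
      by (auto simp: simplex2_def)
    consider "p1 + p2 = 0" | "p1 = 1" | "p1 < 1" "p1 + p2 > 0" using d by linarith
    then show "nested_entropy_right S d = nested_entropy_left S d"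
    proof cases
      case 1
      then have "p1 = 0" "p2 = 0" using d by linarith+
      with d \<open>S 0 = 0\<close> show ?thesis
        by (simp add: nested_entropy_left_def nested_entropy_right_def)
    next
      case 2
      with d \<open>S 1 = 0\<close> show ?thesis
        by (simp add: nested_entropy_left_def nested_entropy_right_def)
    next
      case 3
      with d A show ?thesis
        unfolding assoc_cond_def nested_entropy_left_def nested_entropy_right_def by simp
    qed
  qed
next
  assume "\<forall>d\<in>simplex2. nested_entropy_right S d = nested_entropy_left S d"
  then show "assoc_cond S"
    unfolding assoc_cond_def simplex2_def nested_entropy_left_def nested_entropy_right_def by auto
qed

lemma nested_entropy_scale:
  "nested_entropy_left (\<lambda>p. c * E p) d = c * nested_entropy_left E d"
  "nested_entropy_right (\<lambda>p. c * E p) d = c * nested_entropy_right E d"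
  by (simp_all add: nested_entropy_left_def nested_entropy_right_def algebra_simps split: prod.split)

lemma simplex2_eq_image_nested_left: "simplex2 = (\<lambda>(q, p). (q * p, q * (1 - p))) ` ({0..1} \<times> {0..1})"
proof (intro equalityI subsetI)
  fix d assume "d \<in> simplex2"
  then obtain p1 p2 where d: "d = (p1, p2)" "0 \<le> p1" "0 \<le> p2" "p1 + p2 \<le> 1"
    by (auto simp: simplex2_def)
  show "d \<in> (\<lambda>(q, p). (q * p, q * (1 - p))) ` ({0..1} \<times> {0..1})"
  proof (cases "p1 + p2 = 0")
    case True
    with d show ?thesis by (intro image_eqI[of _ _ "(0, 0)"]) auto
  next
    case False
    then have "p1 + p2 > 0" using d by linarith
    then have "(p1 + p2) * (p1 / (p1 + p2)) = p1" "(p1 + p2) * (1 - p1 / (p1 + p2)) = p2"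
      by (simp_all add: field_simps)
    with d \<open>p1 + p2 > 0\<close> show ?thesis
      by (intro image_eqI[of _ _ "(p1 + p2, p1 / (p1 + p2))"]) auto
  qed
next
  fix d :: "real \<times> real" assume "d \<in> (\<lambda>(q, p). (q * p, q * (1 - p))) ` ({0..1} \<times> {0..1})"
  then obtain q p where "q \<in> {0..1}" "p \<in> {0..1}" "d = (q * p, q * (1 - p))" by auto
  then show "d \<in> simplex2" by (simp add: simplex2_def algebra_simps mult_left_le_one_le)
qed

lemma simplex2_eq_image_nested_right: "simplex2 = (\<lambda>(a, r). (a, (1 - a) * r)) ` ({0..1} \<times> {0..1})"
proof (intro equalityI subsetI)
  fix d assume "d \<in> simplex2"
  then obtain p1 p2 where d: "d = (p1, p2)" "0 \<le> p1" "0 \<le> p2" "p1 + p2 \<le> 1"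
    by (auto simp: simplex2_def)
  show "d \<in> (\<lambda>(a, r). (a, (1 - a) * r)) ` ({0..1} \<times> {0..1})"
  proof (cases "p1 = 1")
    case True
    with d show ?thesis by (intro image_eqI[of _ _ "(1, 0)"]) auto
  next
    case False
    then have "p1 < 1" using d by linarith
    then have "(1 - p1) * (p2 / (1 - p1)) = p2" by simp
    with d \<open>p1 < 1\<close> show ?thesis
      by (intro image_eqI[of _ _ "(p1, p2 / (1 - p1))"]) auto
  qed
next
  fix d :: "real \<times> real" assume "d \<in> (\<lambda>(a, r). (a, (1 - a) * r)) ` ({0..1} \<times> {0..1})"
  then obtain a r where ar: "a \<in> {0..1}" "r \<in> {0..1}" "d = (a, (1 - a) * r)" by auto
  then have "(1 - a) * r \<le> 1 - a" by (intro mult_left_le) auto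
  with ar show "d \<in> simplex2" by (simp add: simplex2_def)
qed

lemma legendre_dual_nested_left_approx:
  fixes \<Phi> :: "real \<Rightarrow> real"
  assumes \<Phi>: "legendre_dual {0..1} E \<Phi>"
    and q: "q \<in> {0..1}" and p: "p \<in> {0..1}" and \<epsilon>: "\<epsilon> > 0"
  shows "\<exists>x y. q * p * x + q * (1 - p) * y - (E q + q * E p) - \<epsilon> < \<Phi> (\<Phi> (x - y) + y)"
proof -
  obtain u where u: "p * u - E p - \<epsilon> / 2 < \<Phi> u"
    using legendre_dual_approx[OF \<Phi> p, of "\<epsilon> / 2"] \<epsilon> by auto
  obtain w where w: "q * w - E q - \<epsilon> / 2 < \<Phi> w"
    using legendre_dual_approx[OF \<Phi> q, of "\<epsilon> / 2"] \<epsilon> by auto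
  \<comment> \<open>choose \<open>x, y\<close> with \<open>x - y = u\<close> and \<open>\<Phi> u + y = w\<close>\<close>
  define y where "y = w - \<Phi> u"
  have "q * (p * u - E p - \<epsilon> / 2) \<le> q * \<Phi> u"
    using u q by (intro mult_left_mono) auto
  moreover have "q * (\<epsilon> / 2) \<le> \<epsilon> / 2"
    using q \<epsilon> by (intro mult_left_le_one_le) auto
  ultimately have "q * p * (u + y) + q * (1 - p) * y - (E q + q * E p) - \<epsilon> < \<Phi> (\<Phi> (u + y - y) + y)"
    using w by (simp add: y_def algebra_simps)
  then show ?thesis by blast
qed

lemma legendre_dual_nested_left:
  fixes \<Phi> :: "real \<Rightarrow> real"
  assumes \<Phi>: "legendre_dual {0..1} E \<Phi>"
  shows "legendre_dual simplex2 (nested_entropy_left E) (\<lambda>(x, y). \<Phi> (\<Phi> (x - y) + y))"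
proof -
  have le: "\<Phi> (\<Phi> (x - y) + y) \<le> q * p * x + q * (1 - p) * y - (E q + q * E p)"
    if q: "q \<in> {0..1}" and p: "p \<in> {0..1}" for x y q p
  proof -
    have "\<Phi> (\<Phi> (x - y) + y) \<le> q * (\<Phi> (x - y) + y) - E q"
      using legendre_dual_le[OF \<Phi> q] by simp
    moreover have "q * \<Phi> (x - y) \<le> q * (p * (x - y) - E p)"
      using legendre_dual_le[OF \<Phi> p, of "x - y"] q by (intro mult_left_mono) auto
    ultimately show ?thesis by (simp add: algebra_simps)
  qed
  have attained: "\<exists>q\<in>{0..1}. \<exists>p\<in>{0..1}. \<Phi> (\<Phi> (x - y) + y) = q * p * x + q * (1 - p) * y - (E q + q * E p)"
    for x y
  proof -
    obtain p where p: "p \<in> {0..1}" "\<Phi> (x - y) = p * (x - y) - E p"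
      using legendre_dual_attained[OF \<Phi>, of "x - y"] by auto
    obtain q where q: "q \<in> {0..1}" "\<Phi> (\<Phi> (x - y) + y) = q * (\<Phi> (x - y) + y) - E q"
      using legendre_dual_attained[OF \<Phi>, of "\<Phi> (x - y) + y"] by auto
    have "\<Phi> (\<Phi> (x - y) + y) = q * (p * (x - y) - E p + y) - E q"
      using p(2) q(2) by simp
    also have "\<dots> = q * p * x + q * (1 - p) * y - (E q + q * E p)"
      by (simp add: algebra_simps)
    finally show ?thesis using p q by blast
  qed
  have "q * p + q * (1 - p) = q" for q p :: real
    by (simp add: algebra_simps)
  then show ?thesis
    by (intro legendre_dual_reparam[OF simplex2_eq_image_nested_left,
          where F = "\<lambda>(q, p). E q + q * E p"])
      (auto simp: nested_entropy_left_def le attained legendre_dual_nested_left_approx[OF \<Phi>])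
qed

lemma legendre_dual_nested_right_approx:
  fixes \<Phi> :: "real \<Rightarrow> real"
  assumes \<Phi>: "legendre_dual {0..1} E \<Phi>"
    and a: "a \<in> {0..1}" and r: "r \<in> {0..1}" and \<epsilon>: "\<epsilon> > 0"
  shows "\<exists>x y. a * x + (1 - a) * r * y - (E a + (1 - a) * E r) - \<epsilon> < \<Phi> (x - \<Phi> y) + \<Phi> y"
proof -
  obtain y where y: "r * y - E r - \<epsilon> / 2 < \<Phi> y"
    using legendre_dual_approx[OF \<Phi> r, of "\<epsilon> / 2"] \<epsilon> by auto
  obtain u where u: "a * u - E a - \<epsilon> / 2 < \<Phi> u"
    using legendre_dual_approx[OF \<Phi> a, of "\<epsilon> / 2"] \<epsilon> by auto
  have "(1 - a) * (r * y - E r - \<epsilon> / 2) \<le> (1 - a) * \<Phi> y"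
    using y a by (intro mult_left_mono) auto
  moreover have "(1 - a) * (\<epsilon> / 2) \<le> \<epsilon> / 2"
    using a \<epsilon> by (intro mult_left_le_one_le) auto
  moreover have "a * (u + \<Phi> y) + (1 - a) * r * y - (E a + (1 - a) * E r) - \<epsilon>
      = (a * u - E a - \<epsilon> / 2) + \<Phi> y + ((1 - a) * (r * y - E r - \<epsilon> / 2) - (1 - a) * \<Phi> y)
        + ((1 - a) * (\<epsilon> / 2) - \<epsilon> / 2)"
    by (simp add: algebra_simps)
  ultimately have "a * (u + \<Phi> y) + (1 - a) * r * y - (E a + (1 - a) * E r) - \<epsilon>
      < \<Phi> (u + \<Phi> y - \<Phi> y) + \<Phi> y"
    using u by simp
  then show ?thesis by blast
qed

lemma legendre_dual_nested_right:
  fixes \<Phi> :: "real \<Rightarrow> real"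
  assumes \<Phi>: "legendre_dual {0..1} E \<Phi>"
  shows "legendre_dual simplex2 (nested_entropy_right E) (\<lambda>(x, y). \<Phi> (x - \<Phi> y) + \<Phi> y)"
proof -
  have le: "\<Phi> (x - \<Phi> y) + \<Phi> y \<le> a * x + (1 - a) * r * y - (E a + (1 - a) * E r)"
    if a: "a \<in> {0..1}" and r: "r \<in> {0..1}" for x y a r
  proof -
    have "\<Phi> (x - \<Phi> y) \<le> a * (x - \<Phi> y) - E a"
      using legendre_dual_le[OF \<Phi> a] by simp
    moreover have "(1 - a) * \<Phi> y \<le> (1 - a) * (r * y - E r)"
      using legendre_dual_le[OF \<Phi> r, of y] a by (intro mult_left_mono) auto
    ultimately show ?thesis by (simp add: algebra_simps)
  qed
  have attained: "\<exists>a\<in>{0..1}. \<exists>r\<in>{0..1}. \<Phi> (x - \<Phi> y) + \<Phi> y = a * x + (1 - a) * r * y - (E a + (1 - a) * E r)"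
    for x y
  proof -
    obtain r where r: "r \<in> {0..1}" "\<Phi> y = r * y - E r"
      using legendre_dual_attained[OF \<Phi>, of y] by auto
    obtain a where a: "a \<in> {0..1}" "\<Phi> (x - \<Phi> y) = a * (x - \<Phi> y) - E a"
      using legendre_dual_attained[OF \<Phi>, of "x - \<Phi> y"] by auto
    have "\<Phi> (x - \<Phi> y) + \<Phi> y = a * x + (1 - a) * \<Phi> y - E a"
      using a(2) by (simp add: algebra_simps)
    also have "\<dots> = a * x + (1 - a) * (r * y - E r) - E a"
      using r(2) by simp
    also have "\<dots> = a * x + (1 - a) * r * y - (E a + (1 - a) * E r)"
      by (simp add: algebra_simps)
    finally show ?thesis using a r by blast
  qed
  have "(1 - a) * E ((1 - a) * r / (1 - a)) = (1 - a) * E r" for a r :: real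
    by (cases "a = 1") simp_all
  then show ?thesis
    by (intro legendre_dual_reparam[OF simplex2_eq_image_nested_right,
          where F = "\<lambda>(a, r). E a + (1 - a) * E r"])
      (auto simp: nested_entropy_right_def le attained legendre_dual_nested_right_approx[OF \<Phi>])
qed

context
  fixes T :: real and S :: "real \<Rightarrow> real"
  assumes cont: "continuous_on {0..1} S"
begin

lemma succ_fun_minimum:
  obtains p where "p \<in> {0..1}" "succ_fun T S x = p * x - T * S p"
    "\<forall>q\<in>{0..1}. succ_fun T S x \<le> q * x - T * S q"
proof -
  have "continuous_on {0..1} (\<lambda>p. p * x - T * S p)"
    by (auto intro!: continuous_intros cont)
  then show ?thesis
    using continuous_on_compact_Inf_image[of "{0..1::real}"] that unfolding succ_fun_def by auto
qed

lemma succ_fun_le: "p \<in> {0..1} \<Longrightarrow> succ_fun T S x \<le> p * x - T * S p"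
  by (metis succ_fun_minimum)

lemma thermo_add_eq_succ_fun: "thermo_add T S x y = succ_fun T S (x - y) + y"
  unfolding thermo_add_def
proof (rule cInf_eq_minimum)
  obtain p where "p \<in> {0..1}" "succ_fun T S (x - y) = p * (x - y) - T * S p"
    using succ_fun_minimum by blast
  then show "succ_fun T S (x - y) + y \<in> (\<lambda>p. p * x + (1 - p) * y - T * S p) ` {0..1}"
    by (intro image_eqI[of _ _ p]) (auto simp: algebra_simps)
next
  fix z assume "z \<in> (\<lambda>p. p * x + (1 - p) * y - T * S p) ` {0..1}"
  then obtain q where "q \<in> {0..1}" "z = q * x + (1 - q) * y - T * S q" by auto
  then show "succ_fun T S (x - y) + y \<le> z"
    using succ_fun_le[of q "x - y"] by (simp add: algebra_simps)
qed

lemma legendre_dual_succ_fun: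
  assumes T_pos: "T > 0" and conc: "concave_on {0..1} S"
  shows "legendre_dual {0..1} (\<lambda>p. T * S p) (succ_fun T S)"
proof (rule legendre_dualI)
  fix x p :: real assume "p \<in> {0..1}"
  then show "succ_fun T S x \<le> inner p x - T * S p" using succ_fun_le by simp
next
  fix x :: real
  obtain p where "p \<in> {0..1}" "succ_fun T S x = p * x - T * S p"
    using succ_fun_minimum by blast
  then show "\<exists>p\<in>{0..1}. succ_fun T S x = inner p x - T * S p" by auto
next
  fix p \<epsilon> :: real assume p: "p \<in> {0..1}" and \<epsilon>: "\<epsilon> > 0"
  obtain m where m: "\<forall>q\<in>{0..1}. S q \<le> S p + \<epsilon> / (2 * T) + m * (q - p)"
    using concave_on_Icc_affine_majorant[OF conc cont p, of "\<epsilon> / (2 * T)"] \<epsilon> T_pos by auto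
  \<comment> \<open>at \<open>x = T m\<close>, with \<open>m\<close> the slope of a \<open>\<delta>\<close>-supporting line at \<open>p\<close>, \<open>p\<close> is a near minimiser\<close>
  obtain q where q: "q \<in> {0..1}" "succ_fun T S (T * m) = q * (T * m) - T * S q"
    using succ_fun_minimum by blast
  have "T * S q \<le> T * (S p + \<epsilon> / (2 * T) + m * (q - p))"
    using m q T_pos by (intro mult_left_mono) auto
  also have "\<dots> = T * S p + \<epsilon> / 2 + T * m * (q - p)"
    using T_pos by (simp add: field_simps)
  finally have "inner p (T * m) - T * S p - \<epsilon> < succ_fun T S (T * m)"
    using q \<epsilon> by (simp add: algebra_simps)
  then show "\<exists>x. inner p x - T * S p - \<epsilon> < succ_fun T S x" ..
qed

lemma thermo_add_assoc:
  assumes "\<forall>x y. succ_fun T S (x - succ_fun T S y) + succ_fun T S y = succ_fun T S (succ_fun T S (x - y) + y)"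
  shows "thermo_add T S (thermo_add T S x y) z = thermo_add T S x (thermo_add T S y z)"
proof -
  have "thermo_add T S (thermo_add T S x y) z = succ_fun T S (succ_fun T S ((x - z) - (y - z)) + (y - z)) + z"
    by (simp add: thermo_add_eq_succ_fun algebra_simps)
  also have "\<dots> = succ_fun T S ((x - z) - succ_fun T S (y - z)) + succ_fun T S (y - z) + z"
    using assms by simp
  also have "\<dots> = thermo_add T S x (thermo_add T S y z)"
    by (simp add: thermo_add_eq_succ_fun algebra_simps)
  finally show ?thesis .
qed

lemma assoc_cond_iff_succ_fun_assoc:
  assumes T_pos: "T > 0" and conc: "concave_on {0..1} S"
  shows "assoc_cond S \<longleftrightarrow>
    (\<forall>x y. succ_fun T S (x - succ_fun T S y) + succ_fun T S y = succ_fun T S (succ_fun T S (x - y) + y))"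
proof -
  note \<Phi> = legendre_dual_succ_fun[OF T_pos conc]
  have "assoc_cond S \<longleftrightarrow>
      (\<forall>d\<in>simplex2. nested_entropy_right (\<lambda>p. T * S p) d = nested_entropy_left (\<lambda>p. T * S p) d)"
    using T_pos by (simp add: assoc_cond_iff_nested_entropy_eq nested_entropy_scale)
  also have "\<dots> \<longleftrightarrow> (\<forall>z. (\<lambda>(x, y). succ_fun T S (x - succ_fun T S y) + succ_fun T S y) z
      = (\<lambda>(x, y). succ_fun T S (succ_fun T S (x - y) + y)) z)"
    using legendre_dual_eq_iff[OF legendre_dual_nested_right[OF \<Phi>] legendre_dual_nested_left[OF \<Phi>]]
    by simp
  finally show ?thesis by simp
qed

end

theorem proposition9p1:
  fixes T :: real and S :: "real \<Rightarrow> real"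
  assumes T_pos: "T > 0"
    and cont: "continuous_on {0..1} S"
    and conc: "concave_on {0..1} S"
  shows "(\<forall>x y. thermo_add T S x y = succ_fun T S (x - y) + y)
    \<and> ((\<forall>p\<in>{0..1}. S p = S (1 - p)) \<longleftrightarrow> (\<forall>x. succ_fun T S x - succ_fun T S (- x) = x))
    \<and> (S 0 = 0 \<longleftrightarrow> (\<forall>x. succ_fun T S x \<le> 0) \<and> (succ_fun T S \<longlongrightarrow> 0) at_top)
    \<and> (S 1 = 0 \<longleftrightarrow> (\<forall>x. succ_fun T S x \<le> x) \<and> ((\<lambda>x. succ_fun T S x - x) \<longlongrightarrow> 0) at_bot)
    \<and> (assoc_cond S \<longleftrightarrow>
         (\<forall>x y. succ_fun T S (x - succ_fun T S y) + succ_fun T S y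
                = succ_fun T S (succ_fun T S (x - y) + y)))
    \<and> (assoc_cond S \<longrightarrow>
         (\<forall>x y z. thermo_add T S (thermo_add T S x y) z = thermo_add T S x (thermo_add T S y z)))"
proof -
  note \<Phi> = legendre_dual_succ_fun[OF cont T_pos conc]
  have "(\<forall>x. succ_fun T S x = succ_fun T S (- x) + x) \<longleftrightarrow> (\<forall>p\<in>{0..1}. T * S p = T * S (1 - p))"
    using legendre_dual_eq_iff[OF \<Phi> legendre_dual_Icc_reflect[OF \<Phi>]] .
  then have symmetric: "(\<forall>p\<in>{0..1}. S p = S (1 - p)) \<longleftrightarrow> (\<forall>x. succ_fun T S x - succ_fun T S (- x) = x)"
    using T_pos by (simp add: algebra_simps)
  show ?thesis
    using thermo_add_eq_succ_fun[OF cont] symmetric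
      legendre_dual_Icc_zero_iff[OF \<Phi>] legendre_dual_Icc_one_iff[OF \<Phi>] T_pos
      assoc_cond_iff_succ_fun_assoc[OF cont T_pos conc] thermo_add_assoc[OF cont]
    by auto
qed

end
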